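(* Let $\mathbf{R}=(\mathbf{R}^{\Rightarrow},\mathbf{R}^{\mathrm{o}})$ and let $M$ be an $\mathbf{R}$-ordered model. For every Boolean formula $A$ and world $w_1$ of $M$: if $w_1\models A$, then $w_1\in\max_{\succeq_N}(\Vert A\Vert)$ or there exists $w_2$ with $w_2\succ_N w_1$ and $w_2\in\max_{\succeq_N}(\Vert A\Vert)$.
   Context: Boolean formulas over propositional letters; $\models_{\mathrm{PL}}$ classical entailment. $\mathbf{R}^{\Rightarrow}$ is a finite set of normality conditionals $A\Rightarrow B$ ($A,B$ Boolean; body $b=A$, head $h=B$) and $\mathbf{R}^{\mathrm{o}}$ a finite set of obligations $\bigcirc(B/A)$. For $X\subseteq\mathbf{R}^{\Rightarrow}$, $\mathrm{m}(X)=\{A\rightarrow B:A\Rightarrow B\in X\}$. Standing assumption (coherence): there is no nonempty $X\subseteq\mathbf{R}^{\Rightarrow}$ with $\mathrm{m}(X)\models_{\mathrm{PL}}\bigwedge_{r\in X}\neg b(r)$. LM-sequence: $\varepsilon(X)=\{A\Rightarrow B\in\mathbf{R}^{\Rightarrow}:\mathrm{m}(X)\models_{\mathrm{PL}}\neg A\}$, $\mathcal{E}_0=\mathbf{R}^{\Rightarrow}$, $\mathcal{E}_{i+1}=\varepsilon(\mathcal{E}_i)$; the order $m$ is the least $k$ with $\mathcal{E}_l=\mathcal{E}_k$ for all $l\geq k$, and $\mathcal{E}_\infty=\mathcal{E}_m$. Ranked partition: $\Delta_i=\mathcal{E}_i\setminus\mathcal{E}_{i+1}$ for $0\le i\le m-1$,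 $\Delta_m=\mathcal{E}_\infty$. For $X\subseteq\mathbf{R}^{\Rightarrow}$ let $\tau(X)=\langle|\Delta_{m-1}\cap X|,\ldots,|\Delta_0\cap X|\rangle$; $X\gtrsim Y$ iff $\tau(X)=\tau(Y)$ or, at the first coordinate where they differ, the entry of $\tau(X)$ is smaller. An $\mathbf{R}$-ordered model is $(W,\succeq_N,\succeq_I,v)$ with $W\neq\emptyset$, $v$ a valuation, $w_1\succeq_N w_2$ iff $F(w_1)\gtrsim F(w_2)$ where $F(w)=\{r\in\mathbf{R}^{\Rightarrow}:w\models b(r)\wedge\neg h(r)\}$ (and $\succeq_I$ the ideality ordering determined by $\mathbf{R}^{\mathrm{o}}$, irrelevant here). $w\succ_N u$ iff $w\succeq_N u$ and not $u\succeq_N w$. $\max_{\succeq_N}(X)=\{w\in X:\forall u\in X(u\succeq_N w\Rightarrow w\succeq_N u)\}$; $\Vert A\Vert$ = set of worlds where $A$ holds. *)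

theory Defs
  imports Main
begin

datatype 'p form =
    Var 'p
  | Bot
  | Neg "'p form"
  | Conj "'p form" "'p form"
  | Disj "'p form" "'p form"
  | Imp "'p form" "'p form"

primrec eval :: "('p \<Rightarrow> bool) \<Rightarrow> 'p form \<Rightarrow> bool" where
  "eval val (Var p) = val p"
| "eval val Bot = False"
| "eval val (Neg a) = (\<not> eval val a)"
| "eval val (Conj a b) = (eval val a \<and> eval val b)"
| "eval val (Disj a b) = (eval val a \<or> eval val b)"
| "eval val (Imp a b) = (eval val a \<longrightarrow> eval val b)"

definition entails :: "'p form set \<Rightarrow> 'p form \<Rightarrow> bool" where
  "entails \<Gamma> A \<longleftrightarrow> (\<forall>val. (\<forall>B\<in>\<Gamma>. eval val B) \<longrightarrow> eval val A)"

definition entails_all :: "'p form set \<Rightarrow> 'p form set \<Rightarrow> bool" where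
  "entails_all \<Gamma> \<Delta> \<longleftrightarrow> (\<forall>val. (\<forall>B\<in>\<Gamma>. eval val B) \<longrightarrow> (\<forall>C\<in>\<Delta>. eval val C))"

text \<open>A normality conditional A \<Rightarrow> B is represented as the pair (A, B): body = fst, head = snd.\<close>
type_synonym 'p cond = "'p form \<times> 'p form"

definition body :: "'p cond \<Rightarrow> 'p form" where "body r = fst r"
definition head :: "'p cond \<Rightarrow> 'p form" where "head r = snd r"

definition mat :: "'p cond set \<Rightarrow> 'p form set" where
  "mat X = {Imp (body r) (head r) | r. r \<in> X}"

definition coherent :: "'p cond set \<Rightarrow> bool" where
  "coherent Rn \<longleftrightarrow> \<not> (\<exists>X. X \<subseteq> Rn \<and> X \<noteq> {} \<and>
      entails_all (mat X) ((\<lambda>r. Neg (body r)) ` X))"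

definition eps :: "'p cond set \<Rightarrow> 'p cond set \<Rightarrow> 'p cond set" where
  "eps Rn X = {r \<in> Rn. entails (mat X) (Neg (body r))}"

definition LM :: "'p cond set \<Rightarrow> nat \<Rightarrow> 'p cond set" where
  "LM Rn i = (eps Rn ^^ i) Rn"

definition LM_order :: "'p cond set \<Rightarrow> nat" where
  "LM_order Rn = (LEAST k. \<forall>l\<ge>k. LM Rn l = LM Rn k)"

definition LM_inf :: "'p cond set \<Rightarrow> 'p cond set" where
  "LM_inf Rn = LM Rn (LM_order Rn)"

definition Delta :: "'p cond set \<Rightarrow> nat \<Rightarrow> 'p cond set" where
  "Delta Rn i = (if i < LM_order Rn then LM Rn i - LM Rn (Suc i) else LM_inf Rn)"

definition tau :: "'p cond set \<Rightarrow> 'p cond set \<Rightarrow> nat list" where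
  "tau Rn X = map (\<lambda>i. card (Delta Rn i \<inter> X)) (rev [0..<LM_order Rn])"

definition set_geq :: "'p cond set \<Rightarrow> 'p cond set \<Rightarrow> 'p cond set \<Rightarrow> bool" where
  "set_geq Rn X Y \<longleftrightarrow> tau Rn X = tau Rn Y \<or>
     (\<exists>j < length (tau Rn X). (\<forall>i<j. tau Rn X ! i = tau Rn Y ! i) \<and> tau Rn X ! j < tau Rn Y ! j)"

definition falsified :: "'p cond set \<Rightarrow> ('w \<Rightarrow> 'p \<Rightarrow> bool) \<Rightarrow> 'w \<Rightarrow> 'p cond set" where
  "falsified Rn v w = {r \<in> Rn. eval (v w) (body r) \<and> \<not> eval (v w) (head r)}"

definition geqN :: "'p cond set \<Rightarrow> ('w \<Rightarrow> 'p \<Rightarrow> bool) \<Rightarrow> 'w \<Rightarrow> 'w \<Rightarrow> bool" where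
  "geqN Rn v w1 w2 \<longleftrightarrow> set_geq Rn (falsified Rn v w1) (falsified Rn v w2)"

definition gtN :: "'p cond set \<Rightarrow> ('w \<Rightarrow> 'p \<Rightarrow> bool) \<Rightarrow> 'w \<Rightarrow> 'w \<Rightarrow> bool" where
  "gtN Rn v w1 w2 \<longleftrightarrow> geqN Rn v w1 w2 \<and> \<not> geqN Rn v w2 w1"

definition ext :: "'w set \<Rightarrow> ('w \<Rightarrow> 'p \<Rightarrow> bool) \<Rightarrow> 'p form \<Rightarrow> 'w set" where
  "ext W v A = {w \<in> W. eval (v w) A}"

definition maxN :: "'p cond set \<Rightarrow> ('w \<Rightarrow> 'p \<Rightarrow> bool) \<Rightarrow> 'w set \<Rightarrow> 'w set" where
  "maxN Rn v X = {w \<in> X. \<forall>u\<in>X. geqN Rn v u w \<longrightarrow> geqN Rn v w u}"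

end

theory Submission
  imports Defs
begin

(* The preorder succeq_N compares worlds by the tau-vectors of their falsified sets, which are
   lists of naturals of one fixed length, ordered lexicographically (smaller is more normal).
   Strict lexicographic order on lists of equal length is total and well-founded, so ||A|| contains
   a world w2 whose tau-vector is lexicographically least; the maximal worlds of ||A|| are exactly
   those with least tau-vector, and every other world of ||A|| lies strictly below w2. *)

lemma lex_conv_nth:
  assumes "length xs = length ys"
  shows "(xs, ys) \<in> lex r \<longleftrightarrow>
         (\<exists>j < length xs. (\<forall>i<j. xs ! i = ys ! i) \<and> (xs ! j, ys ! j) \<in> r)"
proof
  assume "(xs, ys) \<in> lex r"
  then obtain j where "j < length xs" "take j xs = take j ys" "(xs ! j, ys ! j) \<in> r"
    by (rule lex_take_index)
  then show "\<exists>j < length xs. (\<forall>i<j. xs ! i = ys ! i) \<and> (xs ! j, ys ! j) \<in> r"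
    by (metis nth_take)
next
  assume "\<exists>j < length xs. (\<forall>i<j. xs ! i = ys ! i) \<and> (xs ! j, ys ! j) \<in> r"
  then obtain j where j: "j < length xs" and prefix: "\<forall>i<j. xs ! i = ys ! i"
    and differ: "(xs ! j, ys ! j) \<in> r"
    by blast
  have "take j xs = take j ys"
    using j prefix assms by (intro nth_equalityI) auto
  then have "xs = take j xs @ xs ! j # drop (Suc j) xs \<and> ys = take j xs @ ys ! j # drop (Suc j) ys"
    using j assms by (metis id_take_nth_drop)
  then show "(xs, ys) \<in> lex r"
    using assms differ unfolding lex_conv by blast
qed

lemma lex_total_same_length:
  assumes "total r" and "length xs = length ys" and "xs \<noteq> ys"
  shows "(xs, ys) \<in> lex r \<or> (ys, xs) \<in> lex r"
  using total_lexord[OF assms(1)] assms(2,3) by (auto simp: total_on_def lexord_lex)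

lemma lex_less_than_asym: "(xs, ys) \<in> lex less_than \<Longrightarrow> (ys, xs) \<notin> lex less_than"
  by (meson wf_not_sym wf_lex wf_less_than)

lemma lex_less_than_irrefl [simp]: "(xs, xs) \<notin> lex less_than"
  using lex_less_than_asym by blast

lemma length_tau [simp]: "length (tau Rn X) = LM_order Rn"
  by (simp add: tau_def)

lemma set_geq_iff_lex:
  "set_geq Rn X Y \<longleftrightarrow> tau Rn X = tau Rn Y \<or> (tau Rn X, tau Rn Y) \<in> lex less_than"
  unfolding set_geq_def by (simp add: lex_conv_nth)

definition world_tau :: "'p cond set \<Rightarrow> ('w \<Rightarrow> 'p \<Rightarrow> bool) \<Rightarrow> 'w \<Rightarrow> nat list" where
  "world_tau Rn v w = tau Rn (falsified Rn v w)"

lemma world_tau_lex_total: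
  assumes "world_tau Rn v a \<noteq> world_tau Rn v b"
  shows "(world_tau Rn v a, world_tau Rn v b) \<in> lex less_than \<or>
         (world_tau Rn v b, world_tau Rn v a) \<in> lex less_than"
  using lex_total_same_length[OF total_less_than] assms by (simp add: world_tau_def)

lemma geqN_iff_lex:
  "geqN Rn v a b \<longleftrightarrow>
   world_tau Rn v a = world_tau Rn v b \<or> (world_tau Rn v a, world_tau Rn v b) \<in> lex less_than"
  unfolding geqN_def world_tau_def set_geq_iff_lex ..

lemma gtN_iff_lex: "gtN Rn v a b \<longleftrightarrow> (world_tau Rn v a, world_tau Rn v b) \<in> lex less_than"
  using world_tau_lex_total[of Rn v a b]
  unfolding gtN_def geqN_iff_lex by (auto dest: lex_less_than_asym)

lemma maxN_eq_lex_minimal: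
  "maxN Rn v X = {w \<in> X. \<forall>u\<in>X. (world_tau Rn v u, world_tau Rn v w) \<notin> lex less_than}"
  unfolding maxN_def geqN_iff_lex by (fastforce dest: lex_less_than_asym)

theorem proposition1:
  fixes Rn :: "'p cond set" and W :: "'w set" and v :: "'w \<Rightarrow> 'p \<Rightarrow> bool"
    and A :: "'p form" and w1 :: 'w
  assumes "finite Rn" and "coherent Rn"
    and "W \<noteq> {}"
    and "w1 \<in> W" and "eval (v w1) A"
  shows "w1 \<in> maxN Rn v (ext W v A) \<or>
         (\<exists>w2 \<in> W. gtN Rn v w2 w1 \<and> w2 \<in> maxN Rn v (ext W v A))"
proof -
  let ?E = "ext W v A" and ?t = "world_tau Rn v"
  have "w1 \<in> ?E"
    using assms(4,5) by (simp add: ext_def)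
  then obtain w2 where "w2 \<in> ?E" and least: "\<And>u. u \<in> ?E \<Longrightarrow> (?t u, ?t w2) \<notin> lex less_than"
    using wfE_min[OF wf_inv_image[OF wf_lex[OF wf_less_than]], of w1 ?E] by (metis in_inv_image)
  then have w2_max: "w2 \<in> maxN Rn v ?E" and "w2 \<in> W"
    by (auto simp: maxN_eq_lex_minimal ext_def)
  show ?thesis
  proof (cases "w1 \<in> maxN Rn v ?E")
    case False
    then have "?t w1 \<noteq> ?t w2"
      using \<open>w1 \<in> ?E\<close> least by (auto simp: maxN_eq_lex_minimal)
    then have "gtN Rn v w2 w1"
      using world_tau_lex_total least \<open>w1 \<in> ?E\<close> by (metis gtN_iff_lex)
    then show ?thesis
      using w2_max \<open>w2 \<in> W\<close> by blast
  qed simp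
qed

end
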